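(* Suppose Assumption A holds with constant $d$. Let $(m_\epsilon)_{\epsilon\in(0,1)}\subset\mathbb N$ be such that there is a constant $L\in[1,\infty)$ (depending on $\theta^\circ,\lambda,\eta$) with $\sup_{0<\epsilon<1}\epsilon\,m_\epsilon\Lambda_{(m_\epsilon)}/\Phi^{m_\epsilon}_\epsilon\le L$, and $\Phi^{m_\epsilon}_\epsilon\to0$ as $\epsilon\to0$. Put $K:=((1+d^{-1})\vee d^{-2}\|\theta^\circ-\eta\|^2)L$. Then there exists $\epsilon_\theta\in(0,1)$ such that for all $\epsilon\in(0,\epsilon_\theta)$ and all $c\in(0,1/(8K))$, $$\mathbb E_{\theta^\circ}P_{\vartheta^{m_\epsilon}|Y}\Big(\|\vartheta^{m_\epsilon}-\theta^\circ\|^2>(4+\tfrac{11}{2}K)\Phi^{m_\epsilon}_\epsilon\Big)\le2\exp(-m_\epsilon/36),$$ $$\mathbb E_{\theta^\circ}P_{\vartheta^{m_\epsilon}|Y}\Big(\|\vartheta^{m_\epsilon}-\theta^\circ\|^2<(1-8cK)(1+d^{-1})^{-1}\Phi^{m_\epsilon}_\epsilon\Big)\le2\exp(-c^2m_\epsilon/2).$$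
   Context: Let $\ell^2$ be the space of square-summable real sequences with norm $\|\cdot\|$. Fix a bounded real sequence $\lambda=(\lambda_j)_{j\ge1}$ with $\lambda_j\ne0$ for all $j$, a noise level $\epsilon\in(0,1)$ and a true parameter $\theta^\circ\in\ell^2$. The data $Y=(Y_j)_{j\ge1}$ satisfy $Y_j=\lambda_j\theta^\circ_j+\sqrt\epsilon\,\xi_j$ with $\xi_j$ i.i.d. $N(0,1)$; $\mathbb E_{\theta^\circ}$, $P_{\theta^\circ}$ denote expectation and probability under this law. Fix prior means $\eta=(\eta_j)_{j\ge1}$ with $\theta^\circ-\eta\in\ell^2$ and prior variances $\tau_j\in(0,\infty)$ (possibly depending on $\epsilon$). For $m\in\mathbb N$ the sieve prior $P_{\vartheta^m}$ is the law of $\vartheta^m=(\vartheta^m_j)_{j\ge1}$ with independent coordinates, $\vartheta^m_j\sim N(\eta_j,\tau_j)$ for $j\le m$ and $\vartheta^m_j=\eta_j$ a.s. for $j>m$, in the model $Y_j=\lambda_j\vartheta^m_j+\sqrt\epsilon\xi_j$ with $\vartheta^m$ independent of $(\xi_j)$. Put $\sigma_j:=(\lambda_j^2\epsilon^{-1}+\tau_j^{-1})^{-1}$ and $\theta^Y_j:=\sigma_j(\tau_j^{-1}\eta_j+\lambda_j\epsilon^{-1}Y_j)$. The posterior $P_{\vartheta^m|Y}$ makes the coordinates independent with $\vartheta^m_j\sim N(\theta^Y_j,\sigma_j)$ for $j\le m$ and $\vartheta^m_j=\eta_j$ for $j>m$; the Bayes estimator is $\hat\theta^m:=\mathbb E[\vartheta^m|Y]$.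 Define $b_m:=\sum_{j>m}(\theta^\circ_j-\eta_j)^2$. Let $\Lambda_j:=\lambda_j^{-2}$, $\Lambda_{(m)}:=\max_{1\le j\le m}\Lambda_j$, $\bar\Lambda_m:=m^{-1}\sum_{j=1}^m\Lambda_j$ and $\Phi^m_\epsilon:=b_m\vee\epsilon m\bar\Lambda_m$. Let $G_\epsilon:=\max\{1\le m\le\lfloor\epsilon^{-1}\rfloor:\epsilon\Lambda_{(m)}\le\Lambda_1\}$. Assumption A: there is a constant $d>0$ such that $\tau_j\ge d\,(\epsilon^{1/2}\Lambda_j^{1/2}\vee\epsilon\Lambda_j)$ for all $1\le j\le G_\epsilon$ and all $\epsilon\in(0,1)$. *)

theory Defs
  imports "HOL-Probability.Probability"
begin

text \<open>Indexing convention: the paper's coordinate j (j >= 1) is coordinate j-1 here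
  (0-based). Sequences are functions nat => real.\<close>

definition Lam :: "(nat \<Rightarrow> real) \<Rightarrow> nat \<Rightarrow> real" where
  "Lam lam j = 1 / (lam j)^2"

definition LamMax :: "(nat \<Rightarrow> real) \<Rightarrow> nat \<Rightarrow> real" where
  "LamMax lam m = Max {Lam lam j | j. j < m}"

definition LamBar :: "(nat \<Rightarrow> real) \<Rightarrow> nat \<Rightarrow> real" where
  "LamBar lam m = (\<Sum>j<m. Lam lam j) / real m"

definition bias :: "(nat \<Rightarrow> real) \<Rightarrow> (nat \<Rightarrow> real) \<Rightarrow> nat \<Rightarrow> real" where
  "bias th eta m = (\<Sum>j. (th (j + m) - eta (j + m))^2)"

definition Phi :: "(nat \<Rightarrow> real) \<Rightarrow> (nat \<Rightarrow> real) \<Rightarrow> (nat \<Rightarrow> real) \<Rightarrow> real \<Rightarrow> nat \<Rightarrow> real" where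
  "Phi lam th eta eps m = max (bias th eta m) (eps * real m * LamBar lam m)"

definition Geps :: "(nat \<Rightarrow> real) \<Rightarrow> real \<Rightarrow> nat" where
  "Geps lam eps = Max {m. 1 \<le> m \<and> m \<le> nat \<lfloor>1 / eps\<rfloor> \<and> eps * LamMax lam m \<le> Lam lam 0}"

definition sqdist :: "(nat \<Rightarrow> real) \<Rightarrow> (nat \<Rightarrow> real) \<Rightarrow> real" where
  "sqdist x y = (\<Sum>j. (x j - y j)^2)"

definition gauss :: "real \<Rightarrow> real \<Rightarrow> real measure" where
  "gauss mu v = density lborel (normal_density mu (sqrt v))"

text \<open>Law of the data Y, Y_j = lam_j th_j + sqrt eps xi_j\<close>
definition data_law :: "(nat \<Rightarrow> real) \<Rightarrow> (nat \<Rightarrow> real) \<Rightarrow> real \<Rightarrow> (nat \<Rightarrow> real) measure" where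
  "data_law lam th eps = (\<Pi>\<^sub>M j\<in>UNIV. gauss (lam j * th j) eps)"

definition post_var :: "(nat \<Rightarrow> real) \<Rightarrow> (nat \<Rightarrow> real) \<Rightarrow> real \<Rightarrow> nat \<Rightarrow> real" where
  "post_var lam tau eps j = 1 / ((lam j)^2 / eps + 1 / tau j)"

definition post_mean :: "(nat \<Rightarrow> real) \<Rightarrow> (nat \<Rightarrow> real) \<Rightarrow> (nat \<Rightarrow> real) \<Rightarrow> real \<Rightarrow> (nat \<Rightarrow> real) \<Rightarrow> nat \<Rightarrow> real" where
  "post_mean lam eta tau eps Y j = post_var lam tau eps j * (eta j / tau j + lam j * Y j / eps)"

text \<open>Posterior of the sieve prior with m random coordinates\<close>
definition posterior :: "(nat \<Rightarrow> real) \<Rightarrow> (nat \<Rightarrow> real) \<Rightarrow> (nat \<Rightarrow> real) \<Rightarrow> real \<Rightarrow> nat \<Rightarrow> (nat \<Rightarrow> real) \<Rightarrow> (nat \<Rightarrow> real) measure" where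
  "posterior lam eta tau eps m Y = (\<Pi>\<^sub>M j\<in>UNIV.
     (if j < m then gauss (post_mean lam eta tau eps Y j) (post_var lam tau eps j)
      else return borel (eta j)))"

text \<open>Assumption A with constant d (paper indices 1..G_eps = 0-based indices < G_eps)\<close>
definition assumptionA :: "(nat \<Rightarrow> real) \<Rightarrow> (real \<Rightarrow> nat \<Rightarrow> real) \<Rightarrow> real \<Rightarrow> bool" where
  "assumptionA lam tau d \<longleftrightarrow> d > 0 \<and> (\<forall>eps. 0 < eps \<and> eps < 1 \<longrightarrow>
     (\<forall>j < Geps lam eps. tau eps j \<ge> d * max (sqrt (eps * Lam lam j)) (eps * Lam lam j)))"

end

theory Submission
  imports Defs
begin

text \<open>
  Both bounds are Chernoff bounds for \<open>\<parallel>\<vartheta> - \<theta>\<degree>\<parallel>\<^sup>2\<close> under the joint law of the data and the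
  posterior. The frozen coordinates \<open>j \<ge> m\<close> contribute the bias \<open>b\<^sub>m\<close>. For \<open>j < m\<close>, given \<open>Y\<close> the
  error \<open>\<vartheta>\<^sub>j - \<theta>\<degree>\<^sub>j\<close> is Gaussian with a mean that is affine in \<open>Y\<^sub>j\<close>, so under the joint law it is
  Gaussian with explicit mean and variance, and \<open>E exp (s \<parallel>\<vartheta> - \<theta>\<degree>\<parallel>\<^sup>2)\<close> is \<open>exp (s b\<^sub>m)\<close> times a
  product of moment generating functions of squared Gaussians. Assumption A makes these variances
  comparable to \<open>\<epsilon> \<Lambda>\<^sub>j\<close> and bounds the squared means by \<open>\<epsilon> \<Lambda>\<^sub>j (\<theta>\<degree>\<^sub>j - \<eta>\<^sub>j)\<^sup>2 / d\<^sup>2\<close>; the choices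
  \<open>s = m / (8 L \<Phi>)\<close> and \<open>s = - c m / (2 \<Phi>)\<close> give the upper and the lower bound. Finally
  \<open>\<Phi> \<rightarrow> 0\<close> forces \<open>m\<^sub>\<epsilon> \<le> G\<^sub>\<epsilon>\<close> for small \<open>\<epsilon>\<close>, so Assumption A covers every random coordinate.
\<close>


text \<open>\<open>E exp (s X\<^sup>2)\<close> for \<open>X\<close> normal with mean \<open>mu\<close> and variance \<open>v\<close>, finite iff \<open>2 s v < 1\<close>.\<close>

definition sq_gauss_mgf :: "real \<Rightarrow> real \<Rightarrow> real \<Rightarrow> real" where
  "sq_gauss_mgf s mu v = exp (s * mu\<^sup>2 / (1 - 2 * s * v)) / sqrt (1 - 2 * s * v)"

lemma sq_gauss_mgf_nonneg: "2 * s * v \<le> 1 \<Longrightarrow> 0 \<le> sq_gauss_mgf s mu v"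
  unfolding sq_gauss_mgf_def by simp

lemma one_minus_mult_pos_mono:
  fixes s w v :: real
  assumes "0 \<le> w" "w \<le> v" "1 - 2 * s * v > 0"
  shows "1 - 2 * s * w > 0"
proof (cases "s > 0")
  case True
  then have "2 * s * w \<le> 2 * s * v" using assms by simp
  then show ?thesis using assms by linarith
next
  case False
  then have "2 * s * w \<le> 0" using assms by (simp add: mult_nonpos_nonneg)
  then show ?thesis by linarith
qed

lemma sq_gauss_mgf_add_var:
  fixes s w u mu :: real
  assumes q1: "1 - 2 * s * w > 0" and q: "1 - 2 * s * (w + u) > 0"
  shows "sq_gauss_mgf (s / (1 - 2 * s * w)) mu u / sqrt (1 - 2 * s * w) = sq_gauss_mgf s mu (w + u)"
proof -
  define q1 where "q1 = 1 - 2 * s * w"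
  define q2 where "q2 = 1 - 2 * (s / q1) * u"
  have q12: "1 - 2 * s * (w + u) = q1 * q2"
    unfolding q2_def q1_def using q1 by (simp add: field_simps)
  have "q1 > 0" "q2 > 0" using q q1 q12 unfolding q1_def by (auto simp: zero_less_mult_iff)
  then show ?thesis
    unfolding sq_gauss_mgf_def q1_def[symmetric] q2_def[symmetric] q12 real_sqrt_mult
    by (simp add: divide_divide_eq_left mult.commute)
qed

lemma prob_space_gauss: "v > 0 \<Longrightarrow> prob_space (gauss mu v)"
  unfolding gauss_def by (rule prob_space_normal_density) simp

lemma sets_gauss [measurable_cong, simp]: "sets (gauss mu v) = sets borel"
  unfolding gauss_def by simp

lemma gauss_exponent_complete_square:
  fixes v q s a b mu x :: real
  assumes v: "v > 0" and q: "q = 1 - 2 * s * a\<^sup>2 * v" "q > 0"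
  shows "- (x - mu)\<^sup>2 / (2 * v) + s * (a * x + b)\<^sup>2
    = s * (a * mu + b)\<^sup>2 / q - (x - (mu + 2 * s * a * b * v) / q)\<^sup>2 / (2 * (v / q))"
proof -
  have q0: "q \<noteq> 0" using q by simp
  have lhs: "- (x - mu)\<^sup>2 / (2 * v) + s * (a * x + b)\<^sup>2
      = (- (x - mu)\<^sup>2 * q + 2 * v * q * s * (a * x + b)\<^sup>2) / (2 * v * q)"
    using v q0 by (simp add: field_simps)
  have rhs: "s * (a * mu + b)\<^sup>2 / q - (x - (mu + 2 * s * a * b * v) / q)\<^sup>2 / (2 * (v / q))
      = (2 * v * s * (a * mu + b)\<^sup>2 - (q * x - (mu + 2 * s * a * b * v))\<^sup>2) / (2 * v * q)"
    using v q0 by (simp add: field_simps power2_eq_square)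
  have "- (x - mu)\<^sup>2 * q + 2 * v * q * s * (a * x + b)\<^sup>2
      = 2 * v * s * (a * mu + b)\<^sup>2 - (q * x - (mu + 2 * s * a * b * v))\<^sup>2"
    unfolding q(1) by algebra
  then show ?thesis unfolding lhs rhs by simp
qed

lemma nn_integral_gauss_exp_square:
  fixes v s a b mu :: real
  assumes v: "v > 0" and q: "1 - 2 * s * (a\<^sup>2 * v) > 0"
  shows "(\<integral>\<^sup>+x. ennreal (exp (s * (a * x + b)\<^sup>2)) \<partial>gauss mu v)
    = ennreal (sq_gauss_mgf s (a * mu + b) (a\<^sup>2 * v))"
proof -
  define q where "q = 1 - 2 * s * a\<^sup>2 * v"
  have q0: "q > 0" using q unfolding q_def by (simp add: mult.assoc)
  define m1 where "m1 = (mu + 2 * s * a * b * v) / q"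
  define C where "C = sq_gauss_mgf s (a * mu + b) (a\<^sup>2 * v)"
  have C: "C = exp (s * (a * mu + b)\<^sup>2 / q) / sqrt q"
    unfolding C_def sq_gauss_mgf_def q_def by (simp add: mult.assoc)
  have density: "normal_density mu (sqrt v) x * exp (s * (a * x + b)\<^sup>2)
      = C * normal_density m1 (sqrt (v / q)) x" for x
  proof -
    have "normal_density mu (sqrt v) x * exp (s * (a * x + b)\<^sup>2)
        = 1 / sqrt (2 * pi * v) * exp (- (x - mu)\<^sup>2 / (2 * v) + s * (a * x + b)\<^sup>2)"
      using v by (simp add: normal_density_def mult_exp_exp algebra_simps)
    also have "\<dots> = 1 / sqrt (2 * pi * v) * exp (s * (a * mu + b)\<^sup>2 / q) * exp (- (x - m1)\<^sup>2 / (2 * (v / q)))"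
      unfolding gauss_exponent_complete_square[OF v q_def q0] m1_def by (simp add: mult_exp_exp)
    also have "\<dots> = C * normal_density m1 (sqrt (v / q)) x"
      unfolding C using v q0 by (simp add: normal_density_def real_sqrt_mult real_sqrt_divide field_simps)
    finally show ?thesis .
  qed
  have "(\<integral>\<^sup>+x. ennreal (exp (s * (a * x + b)\<^sup>2)) \<partial>gauss mu v)
      = (\<integral>\<^sup>+x. ennreal C * ennreal (normal_density m1 (sqrt (v / q)) x) \<partial>lborel)"
    unfolding gauss_def
  proof (subst nn_integral_density, simp_all, intro nn_integral_cong)
    fix x
    have "0 \<le> C" unfolding C using q0 by simp
    then show "ennreal (normal_density mu (sqrt v) x) * ennreal (exp (s * (a * x + b)\<^sup>2))
        = ennreal C * ennreal (normal_density m1 (sqrt (v / q)) x)"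
      by (simp add: ennreal_mult[symmetric] density normal_density_nonneg)
  qed
  also have "\<dots> = ennreal C"
    using v q0 by (subst nn_integral_cmult) (auto simp: nn_integral_eq_integral normal_density_nonneg)
  finally show ?thesis unfolding C_def .
qed

lemma nn_integral_gauss_sq_gauss_mgf:
  fixes v w s a b mu :: real
  assumes v: "v > 0" and w: "w \<ge> 0" and q: "1 - 2 * s * (w + a\<^sup>2 * v) > 0"
  shows "(\<integral>\<^sup>+y. ennreal (sq_gauss_mgf s (a * y + b) w) \<partial>gauss mu v)
    = ennreal (sq_gauss_mgf s (a * mu + b) (w + a\<^sup>2 * v))"
proof -
  have w_pos: "1 - 2 * s * w > 0"
    by (rule one_minus_mult_pos_mono[OF w _ q]) (use v in simp)
  define q1 where "q1 = 1 - 2 * s * w"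
  have "0 < q1" using w_pos unfolding q1_def .
  have q2: "1 - 2 * (s / q1) * (a\<^sup>2 * v) > 0"
  proof -
    have "1 - 2 * (s / q1) * (a\<^sup>2 * v) = (q1 - 2 * s * (a\<^sup>2 * v)) / q1"
      using \<open>0 < q1\<close> by (simp add: field_simps)
    also have "q1 - 2 * s * (a\<^sup>2 * v) = 1 - 2 * s * (w + a\<^sup>2 * v)"
      unfolding q1_def by (simp add: algebra_simps)
    finally show ?thesis using q \<open>0 < q1\<close> by simp
  qed
  have "(\<integral>\<^sup>+y. ennreal (sq_gauss_mgf s (a * y + b) w) \<partial>gauss mu v)
      = (\<integral>\<^sup>+y. ennreal (1 / sqrt q1) * ennreal (exp (s / q1 * (a * y + b)\<^sup>2)) \<partial>gauss mu v)"
  proof (intro nn_integral_cong)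
    fix y
    have "sq_gauss_mgf s (a * y + b) w = 1 / sqrt q1 * exp (s / q1 * (a * y + b)\<^sup>2)"
      unfolding sq_gauss_mgf_def q1_def by simp
    then show "ennreal (sq_gauss_mgf s (a * y + b) w)
        = ennreal (1 / sqrt q1) * ennreal (exp (s / q1 * (a * y + b)\<^sup>2))"
      using \<open>0 < q1\<close> by (simp add: ennreal_mult[symmetric])
  qed
  also have "\<dots> = ennreal (1 / sqrt q1) * (\<integral>\<^sup>+y. ennreal (exp (s / q1 * (a * y + b)\<^sup>2)) \<partial>gauss mu v)"
    by (rule nn_integral_cmult) measurable
  also have "\<dots> = ennreal (1 / sqrt q1) * ennreal (sq_gauss_mgf (s / q1) (a * mu + b) (a\<^sup>2 * v))"
    by (simp only: nn_integral_gauss_exp_square[OF v q2])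
  also have "\<dots> = ennreal (sq_gauss_mgf (s / q1) (a * mu + b) (a\<^sup>2 * v) / sqrt q1)"
    using \<open>0 < q1\<close> q2 sq_gauss_mgf_nonneg[of "s / q1" "a\<^sup>2 * v"]
    by (simp add: ennreal_mult[symmetric])
  also have "\<dots> = ennreal (sq_gauss_mgf s (a * mu + b) (w + a\<^sup>2 * v))"
    unfolding q1_def sq_gauss_mgf_add_var[OF w_pos q] ..
  finally show ?thesis .
qed

lemma inverse_sqrt_one_minus_le_exp:
  fixes x :: real
  assumes "0 \<le> x" "x \<le> 1 / 2"
  shows "1 / sqrt (1 - x) \<le> exp x"
proof -
  have "1 \<le> (1 + 2 * x) * (1 - x)"
  proof -
    have "0 \<le> x * (1 - 2 * x)" using assms by (intro mult_nonneg_nonneg) auto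
    moreover have "(1 + 2 * x) * (1 - x) = 1 + x * (1 - 2 * x)" by algebra
    ultimately show ?thesis by linarith
  qed
  also have "\<dots> \<le> exp (2 * x) * (1 - x)"
    using exp_ge_add_one_self[of "2 * x"] assms by (intro mult_right_mono) auto
  finally have "1 / (1 - x) \<le> exp (2 * x)" using assms by (simp add: divide_le_eq)
  then have "sqrt (1 / (1 - x)) \<le> sqrt ((exp x)\<^sup>2)"
    by (simp add: power2_eq_square mult_exp_exp)
  then show ?thesis by (simp add: real_sqrt_divide)
qed

lemma inverse_sqrt_one_plus_le_exp:
  fixes x :: real
  assumes "0 \<le> x" "x \<le> 1"
  shows "1 / sqrt (1 + x) \<le> exp (- x / 2 + x\<^sup>2 / 2)"
proof -
  have "exp (x - x\<^sup>2) \<le> 1 + x"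
    using ln_one_plus_pos_lower_bound[OF assms] assms by (subst ln_ge_iff[symmetric]) auto
  then have "1 / (1 + x) \<le> 1 / exp (x - x\<^sup>2)"
    using assms by (intro divide_left_mono) auto
  also have "\<dots> = exp (- (x - x\<^sup>2))" by (simp only: exp_minus inverse_eq_divide)
  also have "exp (- (x - x\<^sup>2)) = (exp (- x / 2 + x\<^sup>2 / 2))\<^sup>2"
    by (simp add: power2_eq_square mult_exp_exp field_simps)
  finally have "sqrt (1 / (1 + x)) \<le> sqrt ((exp (- x / 2 + x\<^sup>2 / 2))\<^sup>2)"
    by (rule real_sqrt_le_mono)
  then show ?thesis by (simp add: real_sqrt_divide)
qed

lemma sq_gauss_mgf_le_pos:
  fixes s mu v :: real
  assumes "0 \<le> s" "0 \<le> v" "2 * s * v \<le> 1 / 2"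
  shows "sq_gauss_mgf s mu v \<le> exp (2 * s * (mu\<^sup>2 + v))"
proof -
  have q: "1 / 2 \<le> 1 - 2 * s * v" using assms by simp
  have "s * mu\<^sup>2 / (1 - 2 * s * v) \<le> s * mu\<^sup>2 / (1 / 2)"
    using q assms by (intro divide_left_mono) auto
  then have "exp (s * mu\<^sup>2 / (1 - 2 * s * v)) \<le> exp (2 * s * mu\<^sup>2)" by simp
  moreover have "1 / sqrt (1 - 2 * s * v) \<le> exp (2 * s * v)"
    using assms by (intro inverse_sqrt_one_minus_le_exp) auto
  ultimately have "exp (s * mu\<^sup>2 / (1 - 2 * s * v)) * (1 / sqrt (1 - 2 * s * v))
      \<le> exp (2 * s * mu\<^sup>2) * exp (2 * s * v)"
    using q by (intro mult_mono) auto
  then show ?thesis unfolding sq_gauss_mgf_def by (simp add: mult_exp_exp distrib_left)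
qed

lemma sq_gauss_mgf_le_neg:
  fixes s mu v :: real
  assumes "s \<le> 0" "0 \<le> v" "- 2 * s * v \<le> 1"
  shows "sq_gauss_mgf s mu v \<le> exp (s * v + 2 * s\<^sup>2 * v\<^sup>2)"
proof -
  have x: "0 \<le> - 2 * s * v" using assms by (simp add: mult_nonpos_nonneg)
  have "0 < 1 - 2 * s * v" using x by linarith
  then have "s * mu\<^sup>2 / (1 - 2 * s * v) \<le> 0"
    using assms by (intro divide_nonpos_pos) (auto simp: mult_nonpos_nonneg)
  then have "exp (s * mu\<^sup>2 / (1 - 2 * s * v)) \<le> 1" by simp
  moreover have "1 / sqrt (1 + - 2 * s * v) \<le> exp (- (- 2 * s * v) / 2 + (- 2 * s * v)\<^sup>2 / 2)"
    using assms x by (intro inverse_sqrt_one_plus_le_exp) auto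
  moreover have "- (- 2 * s * v) / 2 + (- 2 * s * v)\<^sup>2 / 2 = s * v + 2 * s\<^sup>2 * v\<^sup>2"
    by (simp add: power2_eq_square)
  ultimately have "exp (s * mu\<^sup>2 / (1 - 2 * s * v)) * (1 / sqrt (1 - 2 * s * v))
      \<le> 1 * exp (s * v + 2 * s\<^sup>2 * v\<^sup>2)"
    using x by (intro mult_mono) (auto simp: mult.assoc)
  then show ?thesis unfolding sq_gauss_mgf_def by simp
qed

lemma prod_le_exp_sum:
  fixes f g :: "'a \<Rightarrow> real"
  assumes "finite A" and "\<And>i. i \<in> A \<Longrightarrow> 0 \<le> f i \<and> f i \<le> exp (g i)"
  shows "prod f A \<le> exp (sum g A)"
  using prod_mono[of A f "\<lambda>i. exp (g i)"] assms by (simp add: exp_sum)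

lemma exp_mult_exp_le_two_exp:
  fixes a b c :: real
  assumes "a + b \<le> c"
  shows "exp a * exp b \<le> 2 * exp c"
proof -
  have "exp a * exp b \<le> exp c" using assms by (simp add: mult_exp_exp)
  then show ?thesis using exp_gt_zero[of c] by linarith
qed

lemma nn_integral_PiM_prod_finite:
  fixes M :: "'i \<Rightarrow> 'a measure" and f :: "'i \<Rightarrow> 'a \<Rightarrow> ennreal"
  assumes P: "\<And>i. prob_space (M i)" and J: "finite J" "J \<subseteq> I"
    and f[measurable]: "\<And>i. i \<in> J \<Longrightarrow> f i \<in> borel_measurable (M i)"
  shows "(\<integral>\<^sup>+x. (\<Prod>i\<in>J. f i (x i)) \<partial>PiM I M) = (\<Prod>i\<in>J. integral\<^sup>N (M i) (f i))"
proof -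
  interpret product_prob_space M I by (rule product_prob_spaceI) (rule P)
  have mg: "(\<lambda>y. \<Prod>i\<in>J. f i (y i)) \<in> borel_measurable (PiM J M)"
  proof (intro borel_measurable_prod_ennreal)
    fix i assume i: "i \<in> J"
    show "(\<lambda>y. f i (y i)) \<in> borel_measurable (PiM J M)"
      by (rule measurable_compose[of "\<lambda>x. x i" "PiM J M" "M i" "f i" borel]) (auto simp: i f)
  qed
  have "(\<integral>\<^sup>+x. (\<Prod>i\<in>J. f i (x i)) \<partial>PiM I M) = (\<integral>\<^sup>+x. (\<lambda>y. \<Prod>i\<in>J. f i (y i)) (restrict x J) \<partial>PiM I M)"
    by (intro nn_integral_cong prod.cong) auto
  also have "\<dots> = (\<integral>\<^sup>+y. (\<Prod>i\<in>J. f i (y i)) \<partial>distr (PiM I M) (PiM J M) (\<lambda>x. restrict x J))"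
    by (rule nn_integral_distr[OF measurable_restrict_subset[OF J(2)], symmetric]) (simp add: mg)
  also have "\<dots> = (\<integral>\<^sup>+y. (\<Prod>i\<in>J. f i (y i)) \<partial>PiM J M)"
    by (simp add: distr_PiM_restrict_finite J)
  also have "\<dots> = (\<Prod>i\<in>J. integral\<^sup>N (M i) (f i))"
    by (rule product_nn_integral_prod) (auto simp: J)
  finally show ?thesis .
qed

lemma post_var_pos: "eps > 0 \<Longrightarrow> tau j > 0 \<Longrightarrow> post_var lam tau eps j > 0"
  unfolding post_var_def by (intro divide_pos_pos add_nonneg_pos) auto

lemma prob_space_posterior_factor:
  "eps > 0 \<Longrightarrow> tau j > 0 \<Longrightarrow> prob_space
    (if j < m then gauss (post_mean lam eta tau eps Y j) (post_var lam tau eps j) else return borel (eta j))"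
  by (auto simp: prob_space_gauss post_var_pos intro: prob_space_return)

lemma sets_posterior_factor [measurable_cong]:
  "sets (if j < m then gauss mu v else return borel c) = sets borel"
  by simp

lemma sqdist_eq_bias_plus_sum:
  assumes "summable (\<lambda>j. (th j - eta j)\<^sup>2)" and "\<forall>j\<ge>m. v j = eta j"
  shows "sqdist v th = bias th eta m + (\<Sum>j<m. (v j - th j)\<^sup>2)"
proof -
  have tail: "(\<lambda>j. (v (j + m) - th (j + m))\<^sup>2) = (\<lambda>j. (th (j + m) - eta (j + m))\<^sup>2)"
    using assms(2) by (auto simp: power2_commute)
  have "summable (\<lambda>j. (th (j + m) - eta (j + m))\<^sup>2)"
    using assms(1) by (subst summable_iff_shift)
  then have "summable (\<lambda>j. (v (j + m) - th (j + m))\<^sup>2)" by (simp add: tail)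
  then have "summable (\<lambda>j. (v j - th j)\<^sup>2)" by (subst (asm) summable_iff_shift)
  from suminf_split_initial_segment[OF this, of m] show ?thesis
    unfolding sqdist_def bias_def tail by simp
qed

lemma exp_sqdist_eq_prod:
  assumes "summable (\<lambda>j. (th j - eta j)\<^sup>2)" and "\<forall>j\<ge>m. v j = eta j"
  shows "ennreal (exp (s * sqdist v th))
    = ennreal (exp (s * bias th eta m)) * (\<Prod>j<m. ennreal (exp (s * (v j - th j)\<^sup>2)))"
proof -
  have "exp (s * sqdist v th) = exp (s * bias th eta m) * (\<Prod>j<m. exp (s * (v j - th j)\<^sup>2))"
    by (simp add: sqdist_eq_bias_plus_sum[OF assms] distrib_left exp_add exp_sum sum_distrib_left)
  then show ?thesis by (simp add: prod_ennreal ennreal_mult prod_nonneg)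
qed

lemma AE_posterior_frozen:
  assumes "eps > 0" and "\<And>j. tau j > 0"
  shows "AE v in posterior lam eta tau eps m Y. \<forall>j\<ge>m. v j = eta j"
proof -
  interpret product_prob_space "\<lambda>j. if j < m then gauss (post_mean lam eta tau eps Y j) (post_var lam tau eps j)
    else return borel (eta j)" UNIV
    by (rule product_prob_spaceI) (rule prob_space_posterior_factor[OF assms])
  show ?thesis
    unfolding posterior_def AE_all_countable by (auto intro!: AE_component simp: AE_return)
qed

lemma nn_integral_posterior_exp_sqdist:
  fixes lam eta th tau Y :: "nat \<Rightarrow> real"
  assumes eps: "eps > 0" and tau: "\<And>j. tau j > 0" and sm: "summable (\<lambda>j. (th j - eta j)\<^sup>2)"
    and q: "\<And>j. j < m \<Longrightarrow> 1 - 2 * s * post_var lam tau eps j > 0"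
  shows "(\<integral>\<^sup>+v. ennreal (exp (s * sqdist v th)) \<partial>posterior lam eta tau eps m Y)
    = ennreal (exp (s * bias th eta m)
        * (\<Prod>j<m. sq_gauss_mgf s (post_mean lam eta tau eps Y j - th j) (post_var lam tau eps j)))"
proof -
  let ?M = "\<lambda>j. if j < m then gauss (post_mean lam eta tau eps Y j) (post_var lam tau eps j)
    else return borel (eta j)"
  have nonneg: "0 \<le> sq_gauss_mgf s (post_mean lam eta tau eps Y j - th j) (post_var lam tau eps j)"
    if "j < m" for j
    using q[OF that] by (intro sq_gauss_mgf_nonneg) linarith
  have "(\<integral>\<^sup>+v. ennreal (exp (s * sqdist v th)) \<partial>posterior lam eta tau eps m Y)
      = (\<integral>\<^sup>+v. ennreal (exp (s * bias th eta m)) * (\<Prod>j<m. ennreal (exp (s * (v j - th j)\<^sup>2)))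
          \<partial>posterior lam eta tau eps m Y)"
    by (intro nn_integral_cong_AE eventually_mono[OF AE_posterior_frozen[where tau = tau, OF eps tau]])
      (simp add: exp_sqdist_eq_prod[OF sm])
  also have "\<dots> = ennreal (exp (s * bias th eta m))
      * (\<integral>\<^sup>+v. (\<Prod>j<m. ennreal (exp (s * (v j - th j)\<^sup>2))) \<partial>posterior lam eta tau eps m Y)"
    unfolding posterior_def by (rule nn_integral_cmult) measurable
  also have "(\<integral>\<^sup>+v. (\<Prod>j<m. ennreal (exp (s * (v j - th j)\<^sup>2))) \<partial>posterior lam eta tau eps m Y)
      = (\<Prod>j<m. integral\<^sup>N (?M j) (\<lambda>x. ennreal (exp (s * (x - th j)\<^sup>2))))"
    unfolding posterior_def
    by (rule nn_integral_PiM_prod_finite[where f = "\<lambda>j x. ennreal (exp (s * (x - th j)\<^sup>2))",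
        OF prob_space_posterior_factor[OF eps tau]]) auto
  also have "(\<Prod>j<m. integral\<^sup>N (?M j) (\<lambda>x. ennreal (exp (s * (x - th j)\<^sup>2))))
      = (\<Prod>j<m. ennreal (sq_gauss_mgf s (post_mean lam eta tau eps Y j - th j) (post_var lam tau eps j)))"
  proof (rule prod.cong[OF refl])
    fix j assume "j \<in> {..<m}"
    then have j: "j < m" by simp
    have "1 - 2 * s * (1\<^sup>2 * post_var lam tau eps j) > 0" using q[OF j] by simp
    from nn_integral_gauss_exp_square[OF post_var_pos[OF eps tau] this,
        where b = "- th j" and mu = "post_mean lam eta tau eps Y j"]
    show "integral\<^sup>N (?M j) (\<lambda>x. ennreal (exp (s * (x - th j)\<^sup>2)))
        = ennreal (sq_gauss_mgf s (post_mean lam eta tau eps Y j - th j) (post_var lam tau eps j))"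
      using j by simp
  qed
  also have "\<dots> = ennreal (\<Prod>j<m. sq_gauss_mgf s (post_mean lam eta tau eps Y j - th j) (post_var lam tau eps j))"
    by (rule prod_ennreal) (simp add: nonneg)
  finally show ?thesis by (simp add: ennreal_mult')
qed

text \<open>
  Mean and variance of \<open>\<vartheta>\<^sub>j - \<theta>\<degree>\<^sub>j\<close> when \<open>Y\<close> follows the data law and \<open>\<vartheta>\<close> the posterior given \<open>Y\<close>:
  the posterior variance plus the variance of the posterior mean, which is affine in \<open>Y\<^sub>j\<close>.
\<close>

definition err_var :: "(nat \<Rightarrow> real) \<Rightarrow> (nat \<Rightarrow> real) \<Rightarrow> real \<Rightarrow> nat \<Rightarrow> real" where
  "err_var lam tau eps j = post_var lam tau eps j + (post_var lam tau eps j * lam j / eps)\<^sup>2 * eps"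

definition err_mean :: "(nat \<Rightarrow> real) \<Rightarrow> (nat \<Rightarrow> real) \<Rightarrow> (nat \<Rightarrow> real) \<Rightarrow> (nat \<Rightarrow> real) \<Rightarrow> real \<Rightarrow> nat \<Rightarrow> real"
  where "err_mean lam eta th tau eps j = post_var lam tau eps j * (eta j - th j) / tau j"

lemma post_var_le_err_var: "eps > 0 \<Longrightarrow> post_var lam tau eps j \<le> err_var lam tau eps j"
  unfolding err_var_def by simp

lemma one_minus_post_var_pos:
  "eps > 0 \<Longrightarrow> tau j > 0 \<Longrightarrow> 1 - 2 * s * err_var lam tau eps j > 0
    \<Longrightarrow> 1 - 2 * s * post_var lam tau eps j > 0"
  by (rule one_minus_mult_pos_mono[OF less_imp_le[OF post_var_pos] post_var_le_err_var])

lemma nn_integral_data_sq_gauss_mgf: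
  assumes eps: "eps > 0" and tau: "tau j > 0" and q: "1 - 2 * s * err_var lam tau eps j > 0"
  shows "(\<integral>\<^sup>+y. ennreal (sq_gauss_mgf s (post_mean lam eta tau eps (\<lambda>_. y) j - th j) (post_var lam tau eps j))
      \<partial>gauss (lam j * th j) eps)
    = ennreal (sq_gauss_mgf s (err_mean lam eta th tau eps j) (err_var lam tau eps j))"
proof -
  define sg where "sg = post_var lam tau eps j"
  define a where "a = sg * lam j / eps"
  define b where "b = sg * eta j / tau j - th j"
  have affine: "post_mean lam eta tau eps (\<lambda>_. y) j - th j = a * y + b" for y
    unfolding post_mean_def a_def b_def sg_def by (simp add: field_simps)
  have "(lam j)\<^sup>2 / eps + 1 / tau j > 0" using eps tau by (intro add_nonneg_pos) auto
  then have "sg * ((lam j)\<^sup>2 / eps + 1 / tau j) = 1"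
    unfolding sg_def post_var_def by simp
  then have key: "1 - sg * (lam j)\<^sup>2 / eps = sg / tau j"
    by (simp add: algebra_simps)
  have mean: "a * (lam j * th j) + b = err_mean lam eta th tau eps j"
  proof -
    have "a * (lam j * th j) + b = sg * eta j / tau j - th j * (1 - sg * (lam j)\<^sup>2 / eps)"
      unfolding a_def b_def by (simp add: algebra_simps power2_eq_square)
    also have "\<dots> = sg * (eta j - th j) / tau j"
      unfolding key by (simp add: diff_divide_distrib algebra_simps)
    finally show ?thesis unfolding err_mean_def sg_def .
  qed
  have var: "sg + a\<^sup>2 * eps = err_var lam tau eps j"
    unfolding a_def sg_def err_var_def ..
  have "0 \<le> sg" using eps tau unfolding sg_def by (simp add: post_var_pos less_imp_le)
  moreover have "1 - 2 * s * (sg + a\<^sup>2 * eps) > 0" using q unfolding var .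
  ultimately show ?thesis
    unfolding affine sg_def[symmetric] mean[symmetric] var[symmetric]
    by (rule nn_integral_gauss_sq_gauss_mgf[OF eps])
qed

lemma nn_integral_data_posterior_exp_sqdist:
  fixes lam eta th tau :: "nat \<Rightarrow> real"
  assumes eps: "eps > 0" and tau: "\<And>j. tau j > 0" and sm: "summable (\<lambda>j. (th j - eta j)\<^sup>2)"
    and q: "\<And>j. j < m \<Longrightarrow> 1 - 2 * s * err_var lam tau eps j > 0"
  shows "(\<integral>\<^sup>+Y. (\<integral>\<^sup>+v. ennreal (exp (s * sqdist v th)) \<partial>posterior lam eta tau eps m Y) \<partial>data_law lam th eps)
    = ennreal (exp (s * bias th eta m)
        * (\<Prod>j<m. sq_gauss_mgf s (err_mean lam eta th tau eps j) (err_var lam tau eps j)))"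
proof -
  let ?F = "\<lambda>j y. sq_gauss_mgf s (post_mean lam eta tau eps (\<lambda>_. y) j - th j) (post_var lam tau eps j)"
  have q1: "1 - 2 * s * post_var lam tau eps j > 0" if "j < m" for j
    using eps tau q[OF that] by (rule one_minus_post_var_pos)
  have nonneg: "0 \<le> ?F j y" if "j < m" for j y
    using q1[OF that] by (intro sq_gauss_mgf_nonneg) linarith
  have "(\<integral>\<^sup>+Y. (\<integral>\<^sup>+v. ennreal (exp (s * sqdist v th)) \<partial>posterior lam eta tau eps m Y) \<partial>data_law lam th eps)
      = (\<integral>\<^sup>+Y. ennreal (exp (s * bias th eta m)) * (\<Prod>j<m. ennreal (?F j (Y j))) \<partial>data_law lam th eps)"
  proof (intro nn_integral_cong)
    fix Y :: "nat \<Rightarrow> real"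
    have "(\<integral>\<^sup>+v. ennreal (exp (s * sqdist v th)) \<partial>posterior lam eta tau eps m Y)
        = ennreal (exp (s * bias th eta m) * (\<Prod>j<m. ?F j (Y j)))"
      by (subst nn_integral_posterior_exp_sqdist[OF eps tau sm q1]) (auto simp: post_mean_def)
    also have "\<dots> = ennreal (exp (s * bias th eta m)) * ennreal (\<Prod>j<m. ?F j (Y j))"
      by (simp add: ennreal_mult')
    also have "\<dots> = ennreal (exp (s * bias th eta m)) * (\<Prod>j<m. ennreal (?F j (Y j)))"
      by (subst prod_ennreal) (auto simp: nonneg)
    finally show "(\<integral>\<^sup>+v. ennreal (exp (s * sqdist v th)) \<partial>posterior lam eta tau eps m Y)
        = ennreal (exp (s * bias th eta m)) * (\<Prod>j<m. ennreal (?F j (Y j)))" .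
  qed
  also have "\<dots> = ennreal (exp (s * bias th eta m))
      * (\<integral>\<^sup>+Y. (\<Prod>j<m. ennreal (?F j (Y j))) \<partial>data_law lam th eps)"
    unfolding data_law_def by (rule nn_integral_cmult) (unfold sq_gauss_mgf_def post_mean_def, measurable)
  also have "(\<integral>\<^sup>+Y. (\<Prod>j<m. ennreal (?F j (Y j))) \<partial>data_law lam th eps)
      = (\<Prod>j<m. integral\<^sup>N (gauss (lam j * th j) eps) (\<lambda>y. ennreal (?F j y)))"
    unfolding data_law_def
    by (rule nn_integral_PiM_prod_finite[where f = "\<lambda>j y. ennreal (?F j y)", OF prob_space_gauss[OF eps]])
      (auto, unfold sq_gauss_mgf_def post_mean_def, measurable)
  also have "\<dots> = (\<Prod>j<m. ennreal (sq_gauss_mgf s (err_mean lam eta th tau eps j) (err_var lam tau eps j)))"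
    by (rule prod.cong[OF refl]) (simp add: nn_integral_data_sq_gauss_mgf[OF eps tau q])
  also have "\<dots> = ennreal (\<Prod>j<m. sq_gauss_mgf s (err_mean lam eta th tau eps j) (err_var lam tau eps j))"
    using q by (intro prod_ennreal sq_gauss_mgf_nonneg) (simp add: less_imp_le)
  finally show ?thesis by (simp add: ennreal_mult')
qed

lemma emeasure_le_exp_moment:
  fixes f :: "'a \<Rightarrow> real"
  assumes [measurable]: "f \<in> borel_measurable M" and A: "\<And>x. x \<in> A \<Longrightarrow> s * (f x - T) \<ge> 0"
  shows "emeasure M A \<le> ennreal (exp (- s * T)) * (\<integral>\<^sup>+x. ennreal (exp (s * f x)) \<partial>M)"
proof (cases "A \<in> sets M")
  case True
  have "emeasure M A = (\<integral>\<^sup>+x. indicator A x \<partial>M)" using True by simp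
  also have "\<dots> \<le> (\<integral>\<^sup>+x. ennreal (exp (- s * T)) * ennreal (exp (s * f x)) \<partial>M)"
  proof (intro nn_integral_mono)
    fix x
    have "indicator A x \<le> ennreal (exp (s * (f x - T)))"
      using A[of x] by (cases "x \<in> A") auto
    then show "indicator A x \<le> ennreal (exp (- s * T)) * ennreal (exp (s * f x))"
      by (simp add: ennreal_mult[symmetric] mult_exp_exp algebra_simps)
  qed
  also have "\<dots> = ennreal (exp (- s * T)) * (\<integral>\<^sup>+x. ennreal (exp (s * f x)) \<partial>M)"
    by (rule nn_integral_cmult) measurable
  finally show ?thesis .
qed (simp add: emeasure_notin_sets)

lemma nn_integral_posterior_emeasure_le:
  fixes lam eta th tau :: "nat \<Rightarrow> real"
  assumes eps: "eps > 0" and tau: "\<And>j. tau j > 0" and sm: "summable (\<lambda>j. (th j - eta j)\<^sup>2)"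
    and q: "\<And>j. j < m \<Longrightarrow> 1 - 2 * s * err_var lam tau eps j > 0"
    and A: "\<And>v. v \<in> A \<Longrightarrow> s * (sqdist v th - T) \<ge> 0"
  shows "(\<integral>\<^sup>+Y. emeasure (posterior lam eta tau eps m Y) A \<partial>data_law lam th eps)
    \<le> ennreal (exp (s * (bias th eta m - T))
        * (\<Prod>j<m. sq_gauss_mgf s (err_mean lam eta th tau eps j) (err_var lam tau eps j)))"
proof -
  have q1: "1 - 2 * s * post_var lam tau eps j > 0" if "j < m" for j
    using eps tau q[OF that] by (rule one_minus_post_var_pos)
  have moment_eq: "(\<lambda>Y. \<integral>\<^sup>+v. ennreal (exp (s * sqdist v th)) \<partial>posterior lam eta tau eps m Y)
      = (\<lambda>Y. ennreal (exp (s * bias th eta m)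
          * (\<Prod>j<m. sq_gauss_mgf s (post_mean lam eta tau eps Y j - th j) (post_var lam tau eps j))))"
    by (rule ext, rule nn_integral_posterior_exp_sqdist[OF eps tau sm q1])
  have moment_measurable: "(\<lambda>Y. \<integral>\<^sup>+v. ennreal (exp (s * sqdist v th)) \<partial>posterior lam eta tau eps m Y)
      \<in> borel_measurable (data_law lam th eps)"
    unfolding moment_eq data_law_def post_mean_def sq_gauss_mgf_def by measurable
  have "(\<integral>\<^sup>+Y. emeasure (posterior lam eta tau eps m Y) A \<partial>data_law lam th eps)
      \<le> (\<integral>\<^sup>+Y. ennreal (exp (- s * T))
        * (\<integral>\<^sup>+v. ennreal (exp (s * sqdist v th)) \<partial>posterior lam eta tau eps m Y) \<partial>data_law lam th eps)"
  proof (intro nn_integral_mono emeasure_le_exp_moment A)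
    show "(\<lambda>v. sqdist v th) \<in> borel_measurable (posterior lam eta tau eps m Y)" for Y
      unfolding sqdist_def posterior_def by measurable
  qed
  also have "\<dots> = ennreal (exp (- s * T))
      * (\<integral>\<^sup>+Y. (\<integral>\<^sup>+v. ennreal (exp (s * sqdist v th)) \<partial>posterior lam eta tau eps m Y) \<partial>data_law lam th eps)"
    by (rule nn_integral_cmult[OF moment_measurable])
  also have "\<dots> = ennreal (exp (s * (bias th eta m - T))
        * (\<Prod>j<m. sq_gauss_mgf s (err_mean lam eta th tau eps j) (err_var lam tau eps j)))"
  proof -
    have "exp (- s * T) * exp (s * bias th eta m) = exp (s * (bias th eta m - T))"
      by (simp add: mult_exp_exp algebra_simps)
    then show ?thesis
      by (simp add: nn_integral_data_posterior_exp_sqdist[OF eps tau sm q] ennreal_mult'[symmetric]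
          mult.assoc[symmetric])
  qed
  finally show ?thesis .
qed

lemma Lam_pos: "lam j \<noteq> 0 \<Longrightarrow> 0 < Lam lam j"
  unfolding Lam_def by simp

lemma post_var_eq_Lam:
  "lam j \<noteq> 0 \<Longrightarrow> post_var lam tau eps j = 1 / (1 / (eps * Lam lam j) + 1 / tau j)"
  unfolding post_var_def Lam_def by simp

lemma post_var_le_eps_Lam:
  assumes "eps > 0" "tau j > 0" "lam j \<noteq> 0"
  shows "post_var lam tau eps j \<le> eps * Lam lam j"
proof -
  have "0 < eps * Lam lam j" using assms by (simp add: Lam_pos)
  then have "1 / (1 / (eps * Lam lam j) + 1 / tau j) \<le> 1 / (1 / (eps * Lam lam j))"
    using assms by (intro divide_left_mono mult_pos_pos add_pos_pos) auto
  then show ?thesis using assms(3) by (simp add: post_var_eq_Lam)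
qed

lemma err_var_le:
  assumes eps: "eps > 0" and tau: "tau j > 0" and lam: "lam j \<noteq> 0"
  shows "err_var lam tau eps j \<le> 2 * (eps * Lam lam j)"
proof -
  let ?s = "post_var lam tau eps j"
  have "0 < ?s" using eps tau by (rule post_var_pos)
  have s_le: "?s \<le> eps * Lam lam j" using eps tau lam by (rule post_var_le_eps_Lam)
  have "?s * (lam j)\<^sup>2 / eps \<le> eps * Lam lam j * (lam j)\<^sup>2 / eps"
    using s_le eps by (intro divide_right_mono mult_right_mono) auto
  also have "\<dots> = 1" using lam eps unfolding Lam_def by simp
  finally have "err_var lam tau eps j \<le> ?s * 2"
    unfolding err_var_def using \<open>0 < ?s\<close> eps
    by (simp add: power2_eq_square field_simps)
  then show ?thesis using s_le by simp
qed

lemma err_var_ge: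
  assumes eps: "eps > 0" and tau: "tau j > 0" and lam: "lam j \<noteq> 0" and d: "d > 0"
    and tau_ge: "d * (eps * Lam lam j) \<le> tau j"
  shows "eps * Lam lam j / (1 + 1 / d) \<le> err_var lam tau eps j"
proof -
  define a where "a = eps * Lam lam j"
  have a: "a > 0" unfolding a_def using eps lam by (simp add: Lam_pos)
  have "1 / tau j \<le> 1 / (d * a)"
    using tau_ge a d tau unfolding a_def by (intro divide_left_mono) auto
  moreover have "(1 + 1 / d) / a = 1 / a + 1 / (d * a)"
    using a d by (simp add: field_simps)
  ultimately have "1 / a + 1 / tau j \<le> (1 + 1 / d) / a" by simp
  then have "1 / ((1 + 1 / d) / a) \<le> 1 / (1 / a + 1 / tau j)"
    using a d tau by (intro divide_left_mono mult_pos_pos add_pos_pos divide_pos_pos) auto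
  then have "a / (1 + 1 / d) \<le> post_var lam tau eps j"
    using lam unfolding a_def by (simp add: post_var_eq_Lam)
  also have "\<dots> \<le> err_var lam tau eps j" using eps by (rule post_var_le_err_var)
  finally show ?thesis unfolding a_def .
qed

lemma err_mean_sq_le:
  assumes eps: "eps > 0" and tau: "tau j > 0" and lam: "lam j \<noteq> 0" and d: "d > 0"
    and tau_ge: "d * sqrt (eps * Lam lam j) \<le> tau j"
  shows "(err_mean lam eta th tau eps j)\<^sup>2 \<le> eps * Lam lam j * (th j - eta j)\<^sup>2 / d\<^sup>2"
proof -
  define a where "a = eps * Lam lam j"
  have a: "a > 0" unfolding a_def using eps lam by (simp add: Lam_pos)
  have "0 < post_var lam tau eps j" using eps tau by (rule post_var_pos)
  have "post_var lam tau eps j \<le> a" unfolding a_def using eps tau lam by (rule post_var_le_eps_Lam)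
  then have "post_var lam tau eps j / tau j \<le> a / tau j"
    using tau by (intro divide_right_mono) auto
  also have "\<dots> \<le> a / (d * sqrt a)"
    using tau_ge a d tau unfolding a_def by (intro divide_left_mono) auto
  also have "\<dots> = sqrt a / d"
    using a by (subst mult.commute, subst divide_divide_eq_left[symmetric]) (simp add: real_div_sqrt)
  finally have "(post_var lam tau eps j / tau j)\<^sup>2 \<le> (sqrt a / d)\<^sup>2"
    using \<open>0 < post_var lam tau eps j\<close> tau by (intro power_mono) auto
  then have "(post_var lam tau eps j / tau j)\<^sup>2 * (th j - eta j)\<^sup>2 \<le> (sqrt a / d)\<^sup>2 * (th j - eta j)\<^sup>2"
    by (rule mult_right_mono) simp
  then show ?thesis
    unfolding err_mean_def a_def[symmetric] using a
    by (simp add: power2_eq_square power_divide field_simps)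
qed

lemma sum_eps_Lam: "(\<Sum>j<m. eps * Lam lam j) = eps * real m * LamBar lam m"
  unfolding LamBar_def sum_distrib_left[symmetric] by (cases "m = 0") auto

lemma Phi_eq_max_sum: "Phi lam th eta eps m = max (bias th eta m) (\<Sum>j<m. eps * Lam lam j)"
  unfolding Phi_def sum_eps_Lam ..

lemma bias_nonneg: "summable (\<lambda>j. (th j - eta j)\<^sup>2) \<Longrightarrow> 0 \<le> bias th eta m"
  unfolding bias_def by (rule suminf_nonneg) (subst summable_iff_shift, auto)

lemma Phi_pos:
  assumes "0 < eps" "1 \<le> m" "\<forall>j. lam j \<noteq> 0"
  shows "0 < Phi lam th eta eps m"
proof -
  have "0 < (\<Sum>j<m. eps * Lam lam j)"
    using assms by (intro sum_pos) (auto simp: Lam_pos lessThan_empty_iff)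
  then show ?thesis unfolding Phi_eq_max_sum by simp
qed

lemma Lam_le_LamMax: "j < m \<Longrightarrow> Lam lam j \<le> LamMax lam m"
  unfolding LamMax_def by (rule Max_ge) auto

lemma Lam_ge_of_bounded:
  assumes "\<bar>lam j\<bar> \<le> B" "lam j \<noteq> 0"
  shows "1 / B\<^sup>2 \<le> Lam lam j"
proof -
  have le: "(lam j)\<^sup>2 \<le> B\<^sup>2" using assms by (metis abs_ge_zero power2_abs power_mono)
  have pos: "0 < (lam j)\<^sup>2" using assms by simp
  then have "0 < B\<^sup>2" using le by linarith
  then have "0 < B\<^sup>2 * (lam j)\<^sup>2" using pos by (rule mult_pos_pos)
  with le show ?thesis unfolding Lam_def by (intro divide_left_mono) auto
qed

lemma le_Geps:
  assumes "1 \<le> m" "real m \<le> 1 / eps" "eps * LamMax lam m \<le> Lam lam 0"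
  shows "m \<le> Geps lam eps"
proof -
  have "finite {k. 1 \<le> k \<and> k \<le> nat \<lfloor>1 / eps\<rfloor> \<and> eps * LamMax lam k \<le> Lam lam 0}"
    by (rule finite_subset[of _ "{..nat \<lfloor>1 / eps\<rfloor>}"]) auto
  moreover have "m \<le> nat \<lfloor>1 / eps\<rfloor>" using assms(2) by (rule le_nat_floor)
  ultimately show ?thesis unfolding Geps_def using assms by (intro Max_ge) auto
qed

lemma le_Geps_of_Phi_small:
  assumes eps: "0 < eps" and m: "1 \<le> m" and lam: "\<forall>j. lam j \<noteq> 0" and B: "\<forall>j. \<bar>lam j\<bar> \<le> B"
    and LamMax: "eps * m * LamMax lam m \<le> L * Phi lam th eta eps m"
    and small: "L * Phi lam th eta eps m \<le> Lam lam 0" "B\<^sup>2 * Phi lam th eta eps m < 1"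
  shows "m \<le> Geps lam eps"
proof (rule le_Geps[OF m])
  have "0 \<le> LamMax lam m"
    using Lam_le_LamMax[of 0 m lam] Lam_pos[of lam 0] m lam by simp
  then have "1 * LamMax lam m \<le> real m * LamMax lam m"
    using m by (intro mult_right_mono) auto
  then have "eps * LamMax lam m \<le> eps * m * LamMax lam m"
    using eps by (simp add: mult.assoc)
  then show "eps * LamMax lam m \<le> Lam lam 0" using LamMax small(1) by linarith
  have B0: "0 < B\<^sup>2" using B lam by (metis abs_ge_zero zero_less_abs_iff order_less_le_trans zero_less_power)
  have "eps * m / B\<^sup>2 = (\<Sum>j<m. eps * (1 / B\<^sup>2))" by simp
  also have "\<dots> \<le> (\<Sum>j<m. eps * Lam lam j)"
    using eps B lam by (intro sum_mono mult_left_mono Lam_ge_of_bounded) auto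
  also have "\<dots> \<le> Phi lam th eta eps m" unfolding Phi_eq_max_sum by simp
  finally have "eps * m \<le> B\<^sup>2 * Phi lam th eta eps m" using B0 by (simp add: divide_le_eq mult.commute)
  then show "real m \<le> 1 / eps" using eps small(2) by (simp add: le_divide_eq mult.commute)
qed

locale sieve_regime =
  fixes lam eta th tau :: "nat \<Rightarrow> real" and eps d L :: real and m :: nat
  assumes eps_pos: "0 < eps" and tau_pos: "\<And>j. 0 < tau j" and lam_nz: "\<And>j. lam j \<noteq> 0"
    and th_eta_l2: "summable (\<lambda>j. (th j - eta j)\<^sup>2)"
    and m_pos: "1 \<le> m" and d_pos: "0 < d" and L_ge: "1 \<le> L"
    and LamMax_le: "eps * m * LamMax lam m \<le> L * Phi lam th eta eps m"
    and tau_ge: "\<And>j. j < m \<Longrightarrow> d * max (sqrt (eps * Lam lam j)) (eps * Lam lam j) \<le> tau j"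
begin

abbreviation "Ph \<equiv> Phi lam th eta eps m"
abbreviation "V \<equiv> err_var lam tau eps"
abbreviation "mu \<equiv> err_mean lam eta th tau eps"

lemma Ph_pos: "0 < Ph"
  using eps_pos m_pos lam_nz by (intro Phi_pos) auto

lemma bias_le_Ph: "bias th eta m \<le> Ph"
  unfolding Phi_def by simp

lemma eps_Lam_le: "j < m \<Longrightarrow> eps * Lam lam j \<le> L * Ph / m"
proof -
  assume "j < m"
  then have "eps * Lam lam j \<le> eps * m * LamMax lam m / m"
    using eps_pos m_pos Lam_le_LamMax[of j m lam] by simp
  also have "\<dots> \<le> L * Ph / m"
    using LamMax_le m_pos by (intro divide_right_mono) auto
  finally show ?thesis .
qed

lemma V_nonneg: "0 \<le> V j"
proof -
  have "0 < post_var lam tau eps j" using eps_pos tau_pos by (rule post_var_pos)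
  moreover have "post_var lam tau eps j \<le> V j" using eps_pos by (rule post_var_le_err_var)
  ultimately show ?thesis by linarith
qed

lemma tau_ge_sqrt: "j < m \<Longrightarrow> d * sqrt (eps * Lam lam j) \<le> tau j"
  using tau_ge[of j] mult_left_mono[OF max.cobounded1 less_imp_le[OF d_pos]] by (rule order_trans[rotated])

lemma tau_ge_lin: "j < m \<Longrightarrow> d * (eps * Lam lam j) \<le> tau j"
  using tau_ge[of j] mult_left_mono[OF max.cobounded2 less_imp_le[OF d_pos]] by (rule order_trans[rotated])

lemma V_le: "j < m \<Longrightarrow> V j \<le> 2 * L * Ph / m"
proof -
  have "V j \<le> 2 * (eps * Lam lam j)" using eps_pos tau_pos lam_nz by (rule err_var_le)
  moreover assume "j < m"
  ultimately show ?thesis using eps_Lam_le[of j] by simp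
qed

lemma sum_V_le: "(\<Sum>j<m. V j) \<le> 2 * Ph"
proof -
  have "(\<Sum>j<m. V j) \<le> (\<Sum>j<m. 2 * (eps * Lam lam j))"
    by (intro sum_mono err_var_le eps_pos tau_pos lam_nz)
  also have "\<dots> \<le> 2 * Ph" unfolding sum_distrib_left[symmetric] Phi_eq_max_sum by simp
  finally show ?thesis .
qed

lemma sum_V_sq_le: "(\<Sum>j<m. (V j)\<^sup>2) \<le> 4 * L * Ph\<^sup>2 / m"
proof -
  have "(\<Sum>j<m. (V j)\<^sup>2) \<le> (\<Sum>j<m. 2 * L * Ph / m * V j)"
    unfolding power2_eq_square using V_le V_nonneg by (intro sum_mono mult_right_mono) auto
  also have "\<dots> \<le> 2 * L * Ph / m * (2 * Ph)"
    unfolding sum_distrib_left[symmetric] using sum_V_le Ph_pos L_ge by (intro mult_left_mono) auto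
  finally show ?thesis by (simp add: power2_eq_square)
qed

lemma sum_mu_sq_le: "(\<Sum>j<m. (mu j)\<^sup>2) \<le> L * Ph * sqdist th eta / d\<^sup>2"
proof -
  have "(\<Sum>j<m. (mu j)\<^sup>2) \<le> (\<Sum>j<m. L * Ph / m * (th j - eta j)\<^sup>2 / d\<^sup>2)"
  proof (intro sum_mono)
    fix j assume "j \<in> {..<m}"
    then have "(mu j)\<^sup>2 \<le> eps * Lam lam j * (th j - eta j)\<^sup>2 / d\<^sup>2"
      using tau_ge_sqrt d_pos by (intro err_mean_sq_le eps_pos tau_pos lam_nz) auto
    also have "\<dots> \<le> L * Ph / m * (th j - eta j)\<^sup>2 / d\<^sup>2"
      using eps_Lam_le \<open>j \<in> {..<m}\<close> by (intro divide_right_mono mult_right_mono) auto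
    finally show "(mu j)\<^sup>2 \<le> L * Ph / m * (th j - eta j)\<^sup>2 / d\<^sup>2" .
  qed
  also have "\<dots> = L * Ph / m * (\<Sum>j<m. (th j - eta j)\<^sup>2) / d\<^sup>2"
    by (simp add: sum_distrib_left sum_divide_distrib)
  also have "\<dots> \<le> L * Ph * sqdist th eta / d\<^sup>2"
  proof (intro divide_right_mono mult_mono)
    show "L * Ph / m \<le> L * Ph" using m_pos L_ge Ph_pos by (simp add: divide_le_eq)
    show "(\<Sum>j<m. (th j - eta j)\<^sup>2) \<le> sqdist th eta"
      unfolding sqdist_def by (rule sum_le_suminf[OF th_eta_l2]) auto
  qed (use L_ge Ph_pos in \<open>auto intro: sum_nonneg\<close>)
  finally show ?thesis .
qed

lemma Ph_le_bias_plus_sum_V: "Ph / (1 + 1 / d) \<le> bias th eta m + (\<Sum>j<m. V j)"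
proof -
  have dd: "1 \<le> 1 + 1 / d" using d_pos by simp
  have b0: "0 \<le> bias th eta m" using th_eta_l2 by (rule bias_nonneg)
  have "(\<Sum>j<m. eps * Lam lam j) / (1 + 1 / d) \<le> (\<Sum>j<m. V j)"
    unfolding sum_divide_distrib using tau_ge_lin d_pos
    by (intro sum_mono err_var_ge eps_pos tau_pos lam_nz) auto
  moreover have "bias th eta m / (1 + 1 / d) \<le> bias th eta m / 1"
    by (rule divide_left_mono[OF dd b0]) (metis dd mult_1_right order_less_le_trans zero_less_one)
  moreover have "0 \<le> (\<Sum>j<m. V j)" by (intro sum_nonneg V_nonneg)
  ultimately show ?thesis using b0 unfolding Phi_eq_max_sum max_def by auto
qed

lemma upper_exponent_le:
  assumes KL: "L \<le> K" and KD: "L * sqdist th eta / d\<^sup>2 \<le> K" and s_def: "s = m / (8 * L * Ph)"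
  shows "s * (bias th eta m - (4 + 11 / 2 * K) * Ph) + (\<Sum>j<m. 2 * s * ((mu j)\<^sup>2 + V j)) \<le> - (m / 36)"
proof -
  have s: "0 < s" using Ph_pos m_pos L_ge by (simp add: s_def)
  have "(\<Sum>j<m. (mu j)\<^sup>2) \<le> Ph * (L * sqdist th eta / d\<^sup>2)"
    using sum_mu_sq_le by (simp add: mult_ac)
  also have "\<dots> \<le> Ph * K" using KD Ph_pos by (intro mult_left_mono) auto
  finally have "(\<Sum>j<m. (mu j)\<^sup>2) \<le> Ph * K" .
  then have E: "bias th eta m - (4 + 11 / 2 * K) * Ph + 2 * (\<Sum>j<m. (mu j)\<^sup>2) + 2 * (\<Sum>j<m. V j)
      \<le> - 5 / 2 * (K * Ph)"
    using bias_le_Ph sum_V_le mult_right_mono[OF order_trans[OF L_ge KL] less_imp_le[OF Ph_pos]]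
    by (simp add: algebra_simps)
  have "s * (bias th eta m - (4 + 11 / 2 * K) * Ph) + (\<Sum>j<m. 2 * s * ((mu j)\<^sup>2 + V j))
      = s * (bias th eta m - (4 + 11 / 2 * K) * Ph + 2 * (\<Sum>j<m. (mu j)\<^sup>2) + 2 * (\<Sum>j<m. V j))"
    by (simp add: sum.distrib sum_distrib_left algebra_simps)
  also have "\<dots> \<le> - 5 / 2 * (s * (K * Ph))"
    using mult_left_mono[OF E less_imp_le[OF s]] by simp
  also have "\<dots> \<le> - (m / 36)"
  proof -
    have "m / 8 \<le> s * (K * Ph)" using KL Ph_pos L_ge by (simp add: s_def field_simps mult_right_mono)
    then show ?thesis by linarith
  qed
  finally show ?thesis .
qed

lemma lower_exponent_le:
  fixes c r :: real
  assumes KL: "(1 + 1 / d) * L \<le> K" and c: "0 < c" and r_def: "r = c * m / (2 * Ph)"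
  shows "- r * (bias th eta m - (1 - 8 * c * K) / (1 + 1 / d) * Ph)
      + (\<Sum>j<m. - r * V j + 2 * (- r)\<^sup>2 * (V j)\<^sup>2) \<le> - (c\<^sup>2 * m / 2)"
proof -
  define Pd where "Pd = Ph / (1 + 1 / d)"
  define X where "X = c\<^sup>2 * m"
  have r: "0 < r" using c m_pos Ph_pos by (simp add: r_def)
  have rPh: "r * Ph = c * m / 2" using Ph_pos by (simp add: r_def)
  have dd: "0 < 1 + 1 / d" using d_pos by (simp add: add_pos_pos)
  have T_eq: "(1 - 8 * c * K) / (1 + 1 / d) * Ph = Pd - 8 * c * K * Pd"
    unfolding Pd_def by (simp add: diff_divide_distrib algebra_simps)
  have sum_eq: "(\<Sum>j<m. - r * V j + 2 * (- r)\<^sup>2 * (V j)\<^sup>2)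
      = - r * (\<Sum>j<m. V j) + 2 * (r\<^sup>2 * (\<Sum>j<m. (V j)\<^sup>2))"
    by (simp add: sum.distrib sum_subtractf sum_distrib_left sum_negf mult.assoc)
  have "- r * (bias th eta m - (1 - 8 * c * K) / (1 + 1 / d) * Ph)
      + (\<Sum>j<m. - r * V j + 2 * (- r)\<^sup>2 * (V j)\<^sup>2)
      = r * Pd - 8 * c * K * (r * Pd) - r * bias th eta m - r * (\<Sum>j<m. V j)
        + 2 * (r\<^sup>2 * (\<Sum>j<m. (V j)\<^sup>2))"
    unfolding T_eq sum_eq by (simp add: algebra_simps)
  moreover have "r * Pd \<le> r * bias th eta m + r * (\<Sum>j<m. V j)"
    using mult_left_mono[OF Ph_le_bias_plus_sum_V less_imp_le[OF r]] by (simp add: Pd_def algebra_simps)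
  moreover have "4 * L * X \<le> 8 * c * K * (r * Pd)"
  proof -
    have "4 * X * L \<le> 4 * X * (K / (1 + 1 / d))"
      using KL dd unfolding X_def by (intro mult_left_mono) (simp_all add: pos_le_divide_eq mult.commute)
    also have "\<dots> = 8 * c * K * (r * Ph / (1 + 1 / d))"
      unfolding rPh X_def using dd by (simp add: power2_eq_square field_simps)
    finally show ?thesis by (simp add: Pd_def mult_ac)
  qed
  moreover have "r\<^sup>2 * (\<Sum>j<m. (V j)\<^sup>2) \<le> L * X"
  proof -
    have "r\<^sup>2 * (\<Sum>j<m. (V j)\<^sup>2) \<le> r\<^sup>2 * (4 * L * Ph\<^sup>2 / m)" using sum_V_sq_le by (rule mult_left_mono) simp
    also have "\<dots> = 4 * L * (r * Ph)\<^sup>2 / m" by (simp add: power_mult_distrib)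
    also have "\<dots> = L * X" unfolding rPh X_def using m_pos by (simp add: power2_eq_square field_simps)
    finally show ?thesis .
  qed
  moreover have "0 \<le> X" unfolding X_def by simp
  moreover from this have "1 * X \<le> L * X" using L_ge by (intro mult_right_mono)
  ultimately show ?thesis unfolding X_def[symmetric] by linarith
qed

lemma upper_deviation:
  assumes KL: "L \<le> K" and KD: "L * sqdist th eta / d\<^sup>2 \<le> K"
  shows "(\<integral>\<^sup>+Y. emeasure (posterior lam eta tau eps m Y) {v. sqdist v th > (4 + 11 / 2 * K) * Ph}
      \<partial>data_law lam th eps) \<le> ennreal (2 * exp (- (real m / 36)))"
proof -
  define s where "s = m / (8 * L * Ph)"
  define T where "T = (4 + 11 / 2 * K) * Ph"
  have s: "0 < s" using Ph_pos m_pos L_ge by (simp add: s_def)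
  have sV: "2 * s * V j \<le> 1 / 2" if "j < m" for j
  proof -
    have "2 * s * V j \<le> 2 * s * (2 * L * Ph / m)" using V_le[OF that] s by (intro mult_left_mono) auto
    also have "\<dots> = 1 / 2" using Ph_pos m_pos L_ge by (simp add: s_def field_simps)
    finally show ?thesis .
  qed
  have "(\<integral>\<^sup>+Y. emeasure (posterior lam eta tau eps m Y) {v. sqdist v th > T} \<partial>data_law lam th eps)
      \<le> ennreal (exp (s * (bias th eta m - T)) * (\<Prod>j<m. sq_gauss_mgf s (mu j) (V j)))"
    using sV s by (intro nn_integral_posterior_emeasure_le eps_pos tau_pos th_eta_l2) force+
  also have "\<dots> \<le> ennreal (exp (s * (bias th eta m - T)) * exp (\<Sum>j<m. 2 * s * ((mu j)\<^sup>2 + V j)))"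
    using sV s V_nonneg
    by (intro ennreal_leI mult_left_mono prod_le_exp_sum conjI sq_gauss_mgf_nonneg sq_gauss_mgf_le_pos)
      force+
  also have "\<dots> \<le> ennreal (2 * exp (- (real m / 36)))"
    using upper_exponent_le[OF KL KD s_def] unfolding T_def by (intro ennreal_leI exp_mult_exp_le_two_exp)
  finally show ?thesis unfolding T_def .
qed

lemma lower_deviation:
  assumes KL: "(1 + 1 / d) * L \<le> K" and c: "0 < c" "c < 1 / (8 * K)"
  shows "(\<integral>\<^sup>+Y. emeasure (posterior lam eta tau eps m Y)
      {v. sqdist v th < (1 - 8 * c * K) / (1 + 1 / d) * Ph} \<partial>data_law lam th eps)
    \<le> ennreal (2 * exp (- (c\<^sup>2 * real m / 2)))"
proof -
  define r where "r = c * m / (2 * Ph)"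
  define T where "T = (1 - 8 * c * K) / (1 + 1 / d) * Ph"
  have r: "0 < r" using c m_pos Ph_pos by (simp add: r_def)
  have "1 * L \<le> (1 + 1 / d) * L" using d_pos L_ge by (intro mult_right_mono) auto
  then have "8 * (c * L) \<le> 8 * (c * K)" using KL c by simp
  moreover have "8 * (c * K) < 1" using c KL L_ge \<open>1 * L \<le> _\<close> by (simp add: less_divide_eq mult_ac)
  ultimately have cL: "2 * (c * L) \<le> 1" by linarith
  have rV: "2 * r * V j \<le> 1" if "j < m" for j
  proof -
    have "2 * r * V j \<le> 2 * r * (2 * L * Ph / m)" using V_le[OF that] r by (intro mult_left_mono) auto
    also have "\<dots> = 2 * (c * L)" using Ph_pos m_pos by (simp add: r_def field_simps)
    finally show ?thesis using cL by linarith
  qed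
  have "(\<integral>\<^sup>+Y. emeasure (posterior lam eta tau eps m Y) {v. sqdist v th < T} \<partial>data_law lam th eps)
      \<le> ennreal (exp (- r * (bias th eta m - T)) * (\<Prod>j<m. sq_gauss_mgf (- r) (mu j) (V j)))"
    using r V_nonneg
    by (intro nn_integral_posterior_emeasure_le eps_pos tau_pos th_eta_l2)
      (auto simp: add_pos_nonneg mult_le_0_iff)
  also have "\<dots> \<le> ennreal (exp (- r * (bias th eta m - T)) * exp (\<Sum>j<m. - r * V j + 2 * (- r)\<^sup>2 * (V j)\<^sup>2))"
  proof (intro ennreal_leI mult_left_mono prod_le_exp_sum conjI)
    fix j assume "j \<in> {..<m}"
    have "0 \<le> r * V j" using r V_nonneg by simp
    then show "0 \<le> sq_gauss_mgf (- r) (mu j) (V j)" by (intro sq_gauss_mgf_nonneg) linarith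
    show "sq_gauss_mgf (- r) (mu j) (V j) \<le> exp (- r * V j + 2 * (- r)\<^sup>2 * (V j)\<^sup>2)"
      using rV \<open>j \<in> {..<m}\<close> r V_nonneg by (intro sq_gauss_mgf_le_neg) auto
  qed auto
  also have "\<dots> \<le> ennreal (2 * exp (- (c\<^sup>2 * real m / 2)))"
    using lower_exponent_le[OF KL c(1) r_def] unfolding T_def by (intro ennreal_leI exp_mult_exp_le_two_exp)
  finally show ?thesis unfolding T_def .
qed

lemma posterior_deviation_bounds:
  defines "K \<equiv> max (1 + 1 / d) (sqdist th eta / d\<^sup>2) * L"
  assumes "0 < c" "c < 1 / (8 * K)"
  shows "(\<integral>\<^sup>+Y. emeasure (posterior lam eta tau eps m Y) {v. sqdist v th > (4 + 11 / 2 * K) * Ph}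
      \<partial>data_law lam th eps) \<le> ennreal (2 * exp (- (real m / 36)))"
    and "(\<integral>\<^sup>+Y. emeasure (posterior lam eta tau eps m Y)
      {v. sqdist v th < (1 - 8 * c * K) / (1 + 1 / d) * Ph} \<partial>data_law lam th eps)
    \<le> ennreal (2 * exp (- (c\<^sup>2 * real m / 2)))"
proof -
  have K1: "(1 + 1 / d) * L \<le> K" unfolding K_def using L_ge by (intro mult_right_mono) auto
  have "L * (sqdist th eta / d\<^sup>2) \<le> L * max (1 + 1 / d) (sqdist th eta / d\<^sup>2)"
    using L_ge by (intro mult_left_mono) auto
  then have K2: "L * sqdist th eta / d\<^sup>2 \<le> K" unfolding K_def by (simp add: mult.commute)
  have "1 * L \<le> (1 + 1 / d) * L" using d_pos L_ge by (intro mult_right_mono) auto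
  then have "L \<le> K" using K1 by simp
  then show "(\<integral>\<^sup>+Y. emeasure (posterior lam eta tau eps m Y) {v. sqdist v th > (4 + 11 / 2 * K) * Ph}
      \<partial>data_law lam th eps) \<le> ennreal (2 * exp (- (real m / 36)))"
    using K2 by (rule upper_deviation)
  show "(\<integral>\<^sup>+Y. emeasure (posterior lam eta tau eps m Y)
      {v. sqdist v th < (1 - 8 * c * K) / (1 + 1 / d) * Ph} \<partial>data_law lam th eps)
    \<le> ennreal (2 * exp (- (c\<^sup>2 * real m / 2)))"
    using K1 assms(2,3) by (rule lower_deviation)
qed

end

lemma sieve_regime_if_Phi_small:
  fixes tau :: "real \<Rightarrow> nat \<Rightarrow> real"
  assumes A: "assumptionA lam tau d" and eps: "0 < eps" "eps < 1"
    and lam_nz: "\<forall>j. lam j \<noteq> 0" and B: "\<forall>j. \<bar>lam j\<bar> \<le> B"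
    and th_eta_l2: "summable (\<lambda>j. (th j - eta j)\<^sup>2)" and tau_pos: "\<forall>j. 0 < tau eps j"
    and m: "1 \<le> m" and L: "1 \<le> L"
    and L_bound: "eps * m * LamMax lam m / Phi lam th eta eps m \<le> L"
    and small: "L * Phi lam th eta eps m \<le> Lam lam 0" "B\<^sup>2 * Phi lam th eta eps m < 1"
  shows "sieve_regime lam eta th (tau eps) eps d L m"
proof -
  have LamMax_le: "eps * m * LamMax lam m \<le> L * Phi lam th eta eps m"
    using L_bound Phi_pos[OF eps(1) m lam_nz] by (simp add: divide_le_eq mult.commute)
  have "m \<le> Geps lam eps"
    using eps(1) m lam_nz B LamMax_le small by (rule le_Geps_of_Phi_small)
  then show ?thesis
    using A eps lam_nz th_eta_l2 tau_pos m L LamMax_le unfolding assumptionA_def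
    by unfold_locales (auto simp: mult.commute)
qed

theorem mainTheorem6:
  fixes lam th eta :: "nat \<Rightarrow> real"
    and tau :: "real \<Rightarrow> nat \<Rightarrow> real"
    and m :: "real \<Rightarrow> nat"
    and d L :: real
  assumes lam_bdd: "\<exists>B. \<forall>j. \<bar>lam j\<bar> \<le> B"
    and lam_nz: "\<forall>j. lam j \<noteq> 0"
    and th_l2: "summable (\<lambda>j. (th j)^2)"
    and th_eta_l2: "summable (\<lambda>j. (th j - eta j)^2)"
    and tau_pos: "\<forall>eps j. 0 < eps \<and> eps < 1 \<longrightarrow> tau eps j > 0"
    and A: "assumptionA lam tau d"
    and m_pos: "\<forall>eps. 0 < eps \<and> eps < 1 \<longrightarrow> m eps \<ge> 1"
    and L_ge: "L \<ge> 1"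
    and L_bound: "\<forall>eps. 0 < eps \<and> eps < 1 \<longrightarrow>
        eps * real (m eps) * LamMax lam (m eps) / Phi lam th eta eps (m eps) \<le> L"
    and Phi_lim: "((\<lambda>eps. Phi lam th eta eps (m eps)) \<longlongrightarrow> 0) (at_right 0)"
  shows "\<exists>eps_th. 0 < eps_th \<and> eps_th < 1 \<and>
    (\<forall>eps c. 0 < eps \<and> eps < eps_th \<and> 0 < c \<and>
        c < 1 / (8 * (max (1 + 1 / d) (sqdist th eta / d^2) * L)) \<longrightarrow>
      (let K = max (1 + 1 / d) (sqdist th eta / d^2) * L;
           Ph = Phi lam th eta eps (m eps) in
       (\<integral>\<^sup>+ Y. emeasure (posterior lam eta (tau eps) eps (m eps) Y)
            {v. sqdist v th > (4 + 11 / 2 * K) * Ph} \<partial>data_law lam th eps)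
          \<le> ennreal (2 * exp (- (real (m eps) / 36)))
       \<and> (\<integral>\<^sup>+ Y. emeasure (posterior lam eta (tau eps) eps (m eps) Y)
            {v. sqdist v th < (1 - 8 * c * K) / (1 + 1 / d) * Ph} \<partial>data_law lam th eps)
          \<le> ennreal (2 * exp (- (c^2 * real (m eps) / 2)))))"
proof -
  obtain B where B: "\<forall>j. \<bar>lam j\<bar> \<le> B" using lam_bdd by blast
  have "0 < B\<^sup>2" using B lam_nz by (metis abs_ge_zero zero_less_abs_iff order_less_le_trans zero_less_power)
  then have "0 < min (Lam lam 0 / L) (1 / B\<^sup>2)" using Lam_pos lam_nz L_ge by simp
  from order_tendstoD(2)[OF Phi_lim this] obtain delta where "0 < delta" and small:
    "\<And>eps. 0 < eps \<Longrightarrow> eps < delta \<Longrightarrow> Phi lam th eta eps (m eps) < min (Lam lam 0 / L) (1 / B\<^sup>2)"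
    unfolding eventually_at_right_field by auto
  show ?thesis
  proof (intro exI[of _ "min delta (1 / 2)"] conjI allI impI, goal_cases)
    case (3 eps c)
    then have eps: "0 < eps" "eps < 1" by auto
    have "L * Phi lam th eta eps (m eps) \<le> Lam lam 0" "B\<^sup>2 * Phi lam th eta eps (m eps) < 1"
      using small[of eps] 3 L_ge \<open>0 < B\<^sup>2\<close> by (auto simp: pos_less_divide_eq mult.commute)
    with eps interpret sieve_regime lam eta th "tau eps" eps d L "m eps"
      using A lam_nz B th_eta_l2 tau_pos m_pos L_ge L_bound by (intro sieve_regime_if_Phi_small) auto
    have "0 < c" "c < 1 / (8 * (max (1 + 1 / d) (sqdist th eta / d\<^sup>2) * L))" using 3 by auto
    from posterior_deviation_bounds[OF this] show ?case by (simp add: Let_def)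
  qed (use \<open>0 < delta\<close> in auto)
qed

end
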